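(* Let $P,Q$ be convex polygons in the plane, with all vertices in general position, that form a weakly disjoint pair. Then their boundaries $\partial P$ and $\partial Q$ intersect in at most two points.
   Context: Two convex polygons $P,Q$ form a weakly disjoint pair if $P\setminus Q$ and $Q\setminus P$ are both connected sets and $P$ and $Q$ share no vertex. The convex hull of a line segment is regarded as a valid degenerate convex polygon with two edges. *)

theory Defs
  imports "HOL-Analysis.Analysis"
begin

type_synonym point = "real^2"

definition vertices :: "point set \<Rightarrow> point set" where
  "vertices P = {v. v extreme_point_of P}"

text \<open>A convex polygon: the convex hull of finitely many points, with at least two
  vertices (a segment is allowed as a degenerate polygon).\<close>
definition convex_polygon :: "point set \<Rightarrow> bool" where
  "convex_polygon P \<longleftrightarrow> (\<exists>S. finite S \<and> P = convex hull S) \<and> card (vertices P) \<ge> 2"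

definition weakly_disjoint :: "point set \<Rightarrow> point set \<Rightarrow> bool" where
  "weakly_disjoint P Q \<longleftrightarrow> connected (P - Q) \<and> connected (Q - P) \<and>
     vertices P \<inter> vertices Q = {}"

definition general_position :: "point set \<Rightarrow> bool" where
  "general_position V \<longleftrightarrow> (\<forall>a\<in>V. \<forall>b\<in>V. \<forall>c\<in>V.
      a \<noteq> b \<and> a \<noteq> c \<and> b \<noteq> c \<longrightarrow> \<not> collinear {a, b, c})"

end

theory Submission
  imports Defs
begin

text \<open>Suppose three distinct points lie on both boundaries. If they are collinear, the middle one is
  a boundary point inside a segment of \<open>P \<inter> Q\<close>, so the line through them supports both polygons;
  each polygon then has an edge, hence two vertices, on that line, and together with a vertex of the
  other polygon this gives three collinear vertices. If they span a triangle, the triangle lies in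
  \<open>P \<inter> Q\<close>, so \<open>P - Q\<close> lies beyond its edges. No point of \<open>P\<close> lies beyond two edges at once (the
  common corner would then be an interior point of \<open>P\<close>), so by connectedness \<open>P - Q\<close> lies beyond a
  single edge, and so does \<open>Q - P\<close>. Hence \<open>P\<close> and \<open>Q\<close> coincide beyond some edge; an extreme
  point is a local notion and the vertex sets are disjoint, so no vertex lies there, and the line of
  that edge again supports both polygons.\<close>

lemma supporting_hyperplane_frontier:
  fixes S :: "'a::euclidean_space set"
  assumes "convex S" "closed S" "y \<in> frontier S"
  obtains n where "n \<noteq> 0" "\<And>x. x \<in> S \<Longrightarrow> n \<bullet> x \<le> n \<bullet> y"
proof -
  have "y \<in> S" using assms frontier_subset_closed by blast
  show ?thesis
  proof (cases "interior S = {}")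
    case True
    obtain n d where n: "n \<noteq> 0" "S \<subseteq> {x. n \<bullet> x = d}"
      by (rule empty_interior_subset_hyperplane[OF assms(1) True])
    have "n \<bullet> x = n \<bullet> y" if "x \<in> S" for x
    proof -
      have "n \<bullet> x = d" "n \<bullet> y = d" using n(2) \<open>y \<in> S\<close> that by blast+
      then show ?thesis by simp
    qed
    then show ?thesis using that[OF n(1)] by (metis order_refl)
  next
    case False
    have "y \<notin> interior S" using assms(3) by (simp add: frontier_def)
    then have "y \<notin> rel_interior S" using False rel_interior_nonempty_interior by blast
    then obtain n where "n \<noteq> 0" "\<And>x. x \<in> S \<Longrightarrow> n \<bullet> y \<le> n \<bullet> x"
      using supporting_hyperplane_rel_boundary[OF assms(1) \<open>y \<in> S\<close>] by metis
    then show ?thesis using that[of "- n"] by simp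
  qed
qed

lemma two_extreme_points_of_face:
  fixes S :: "'a::euclidean_space set"
  assumes "compact S" "convex S" "F face_of S" "a \<in> F" "b \<in> F" "a \<noteq> b"
  obtains p q where "p \<noteq> q" "p extreme_point_of S" "q extreme_point_of S" "p \<in> F" "q \<in> F"
proof -
  let ?E = "{x. x extreme_point_of F}"
  have F: "F = convex hull ?E"
    using Krein_Milman_Minkowski face_of_imp_compact[OF assms(2,1,3)] face_of_imp_convex[OF assms(3)]
    by blast
  have "\<exists>p\<in>?E. \<exists>q\<in>?E. p \<noteq> q"
  proof (rule ccontr)
    assume "\<not> ?thesis"
    obtain p where "p \<in> ?E"
      using F assms(4) by fastforce
    with \<open>\<not> ?thesis\<close> have "?E \<subseteq> {p}" by blast
    then have "F \<subseteq> {p}"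
      using F hull_minimal[of ?E "{p}" convex] by simp
    then show False using assms(4-6) by blast
  qed
  then obtain p q where "p \<noteq> q" "p extreme_point_of F" "q extreme_point_of F"
    by blast
  then show ?thesis
    by (intro that[of p q]) (simp_all add: extreme_point_of_face[OF assms(3)])
qed

lemma extreme_point_of_locally_eq:
  fixes S T :: "'a::real_normed_vector set"
  assumes "open U" "S \<inter> U = T \<inter> U" "convex T" "v \<in> U" "v extreme_point_of S"
  shows "v extreme_point_of T"
proof -
  have "v \<in> T" using assms(2,4,5) by (auto simp: extreme_point_of_def)
  obtain e where "e > 0" "ball v e \<subseteq> U" using assms(1,4) open_contains_ball by blast
  show ?thesis unfolding extreme_point_of_def
  proof (intro conjI \<open>v \<in> T\<close> ballI notI)
    fix a b assume "a \<in> T" "b \<in> T" "v \<in> open_segment a b"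
    then obtain u where u: "a \<noteq> b" "0 < u" "u < 1" "v = (1 - u) *\<^sub>R a + u *\<^sub>R b"
      by (auto simp: in_segment)
    define d where "d = e / (e + norm (a - v) + norm (b - v))"
    have "0 < e + norm (a - v) + norm (b - v)"
      using \<open>e > 0\<close> by (simp add: add_pos_nonneg)
    then have d: "0 < d" "d \<le> 1" "d * norm (a - v) < e" "d * norm (b - v) < e"
      using \<open>e > 0\<close> by (auto simp: d_def field_simps add_pos_nonneg)
    let ?a = "v + d *\<^sub>R (a - v)" and ?b = "v + d *\<^sub>R (b - v)"
    have "?a = (1 - d) *\<^sub>R v + d *\<^sub>R a" "?b = (1 - d) *\<^sub>R v + d *\<^sub>R b"
      by (simp_all add: algebra_simps)
    then have "?a \<in> T" "?b \<in> T"
      using convexD[OF assms(3) \<open>v \<in> T\<close>] \<open>a \<in> T\<close> \<open>b \<in> T\<close> d(1,2) by auto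
    moreover have "?a \<in> ball v e" "?b \<in> ball v e"
      using d by (simp_all add: dist_norm)
    ultimately have "?a \<in> S" "?b \<in> S"
      using assms(2) \<open>ball v e \<subseteq> U\<close> by blast+
    moreover have "v \<in> open_segment ?a ?b"
    proof -
      have "(1 - u) *\<^sub>R ?a + u *\<^sub>R ?b = v + d *\<^sub>R ((1 - u) *\<^sub>R a + u *\<^sub>R b - v)"
        by (simp add: algebra_simps)
      then have "v = (1 - u) *\<^sub>R ?a + u *\<^sub>R ?b"
        using u(4) by simp
      moreover have "?a \<noteq> ?b" using u(1) d(1) by simp
      ultimately show ?thesis
        using u(2,3) by (auto simp: in_segment)
    qed
    ultimately show False
      using assms(5) by (auto simp: extreme_point_of_def)
  qed
qed

lemma connected_avoids_two_of_three_open: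
  assumes "connected S" "open A" "open B" "open C" "S \<subseteq> A \<union> B \<union> C"
    and "A \<inter> B \<inter> S = {}" "B \<inter> C \<inter> S = {}" "C \<inter> A \<inter> S = {}"
  shows "(A \<inter> S = {} \<and> B \<inter> S = {}) \<or> (B \<inter> S = {} \<and> C \<inter> S = {}) \<or> (C \<inter> S = {} \<and> A \<inter> S = {})"
proof -
  have "A \<inter> S = {} \<or> (B \<union> C) \<inter> S = {}"
    using connectedD[OF assms(1,2) open_Un[OF assms(3,4)]] assms(5-8) by blast
  moreover have "B \<inter> S = {} \<or> C \<inter> S = {}" if "A \<inter> S = {}"
    using connectedD[OF assms(1,3,4) assms(7)] assms(5) that by blast
  ultimately show ?thesis by blast
qed

lemma finite_card_le_2_if_no_three_distinct:
  assumes "\<And>x y z. x \<in> S \<Longrightarrow> y \<in> S \<Longrightarrow> z \<in> S \<Longrightarrow> x \<noteq> y \<Longrightarrow> x \<noteq> z \<Longrightarrow> y \<noteq> z \<Longrightarrow> False"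
  shows "finite S \<and> card S \<le> 2"
proof -
  obtain x y where "S \<subseteq> {x, y}"
  proof (cases "S = {}")
    case False
    then obtain x where "x \<in> S" by blast
    show ?thesis
    proof (cases "S \<subseteq> {x}")
      case False
      then obtain y where "y \<in> S" "y \<noteq> x" by blast
      then have "S \<subseteq> {x, y}" using assms \<open>x \<in> S\<close> by blast
      then show ?thesis by (rule that)
    qed (use that in blast)
  qed (use that in blast)
  moreover have "card {x, y} \<le> 2"
    by (simp add: card_insert_if)
  ultimately show ?thesis
    using card_mono[of "{x, y}" S] finite_subset[of S "{x, y}"] by simp
qed

definition rot90 :: "point \<Rightarrow> point" where
  "rot90 x = vector [- x$2, x$1]"

lemma rot90_eq_0_iff [simp]: "rot90 x = 0 \<longleftrightarrow> x = 0"
  by (auto simp: rot90_def vec_eq_iff forall_2)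

definition orient :: "point \<Rightarrow> point \<Rightarrow> point \<Rightarrow> real" where
  "orient a b c = (b$1 - a$1) * (c$2 - a$2) - (b$2 - a$2) * (c$1 - a$1)"

lemma orient_eq_inner: "orient a b w = rot90 (b - a) \<bullet> w - rot90 (b - a) \<bullet> a"
  by (simp add: orient_def rot90_def inner_vec_def sum_2 algebra_simps)

lemma orient_self [simp]: "orient a b a = 0" "orient a b b = 0"
  by (simp_all add: orient_def)

lemma hyperplane_eq_affine_hull_2:
  fixes n a b :: point
  assumes "n \<noteq> 0" "a \<noteq> b" "n \<bullet> a = d" "n \<bullet> b = d"
  shows "{x. n \<bullet> x = d} = affine hull {a, b}"
proof (rule affine_dim_equal[symmetric])
  show "affine hull {a, b} \<subseteq> {x. n \<bullet> x = d}"
    using assms by (intro hull_minimal) (auto simp: affine_hyperplane)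
  show "aff_dim (affine hull {a, b}) = aff_dim {x. n \<bullet> x = d}"
    using assms by simp
qed (auto simp: affine_hyperplane)

lemma orient_eq_0_iff:
  assumes "a \<noteq> b"
  shows "orient a b w = 0 \<longleftrightarrow> w \<in> affine hull {a, b}"
proof -
  have "rot90 (b - a) \<bullet> b = rot90 (b - a) \<bullet> a"
    using orient_eq_inner[of a b b] by simp
  then have "{x. rot90 (b - a) \<bullet> x = rot90 (b - a) \<bullet> a} = affine hull {a, b}"
    using assms by (intro hyperplane_eq_affine_hull_2) auto
  then show ?thesis
    by (auto simp: orient_eq_inner)
qed

lemma orient_nonzero_if_not_collinear:
  assumes "\<not> collinear {a, b, c}"
  shows "orient a b c \<noteq> 0"
  using assms affine_hull_3_imp_collinear orient_eq_0_iff[of a b c] by fastforce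

text \<open>The barycentric coordinate of \<open>w\<close> attached to the vertex \<open>c\<close> of the triangle \<open>abc\<close>;
  for a degenerate triangle it is the junk value \<open>0\<close>.\<close>
definition bary :: "point \<Rightarrow> point \<Rightarrow> point \<Rightarrow> point \<Rightarrow> real" where
  "bary a b c w = orient a b w / orient a b c"

lemma bary_eq_inner:
  "bary a b c w = (rot90 (b - a) /\<^sub>R orient a b c) \<bullet> w - (rot90 (b - a) /\<^sub>R orient a b c) \<bullet> a"
  unfolding bary_def orient_eq_inner[of a b w] by (simp add: divide_inverse algebra_simps)

lemma orient_cyclic: "orient b c a = orient a b c" "orient c a b = orient a b c"
  by (simp_all add: orient_def algebra_simps)

lemma bary_sum:
  assumes "\<not> collinear {a, b, c}"
  shows "bary b c a w + bary c a b w + bary a b c w = 1"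
proof -
  have "orient b c w + orient c a w + orient a b w = orient a b c"
    by (simp add: orient_def algebra_simps)
  then show ?thesis
    using orient_nonzero_if_not_collinear[OF assms] by (simp add: bary_def orient_cyclic field_simps)
qed

lemma bary_combination:
  assumes "\<not> collinear {a, b, c}"
  shows "bary b c a w *\<^sub>R a + bary c a b w *\<^sub>R b + bary a b c w *\<^sub>R c = w"
proof -
  have "orient b c w *\<^sub>R a + orient c a w *\<^sub>R b + orient a b w *\<^sub>R c = orient a b c *\<^sub>R w"
    by (simp add: vec_eq_iff forall_2 orient_def algebra_simps)
  then have "w = (1 / orient a b c) *\<^sub>R (orient b c w *\<^sub>R a + orient c a w *\<^sub>R b + orient a b w *\<^sub>R c)"
    using orient_nonzero_if_not_collinear[OF assms] by simp
  then show ?thesis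
    by (simp add: bary_def orient_cyclic scaleR_add_right)
qed

lemma in_convex_hull_3_if_bary_nonneg:
  assumes "\<not> collinear {a, b, c}"
    and "0 \<le> bary b c a w" "0 \<le> bary c a b w" "0 \<le> bary a b c w"
  shows "w \<in> convex hull {a, b, c}"
  unfolding convex_hull_3
proof (intro CollectI exI conjI)
  show "w = bary b c a w *\<^sub>R a + bary c a b w *\<^sub>R b + bary a b c w *\<^sub>R c"
    using bary_combination[OF assms(1)] by simp
qed (use assms bary_sum in auto)

definition beyond_edge :: "point \<Rightarrow> point \<Rightarrow> point \<Rightarrow> point set" where
  "beyond_edge a b c = {w. bary a b c w < 0}"

lemma open_beyond_edge: "open (beyond_edge a b c)"
  unfolding beyond_edge_def bary_eq_inner by (intro open_Collect_less continuous_intros)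

definition line_supports :: "point \<Rightarrow> point \<Rightarrow> point set \<Rightarrow> bool" where
  "line_supports a b S \<longleftrightarrow> (\<exists>n d. n \<noteq> 0 \<and> n \<bullet> a = d \<and> n \<bullet> b = d \<and> (\<forall>x\<in>S. n \<bullet> x \<le> d))"

lemma line_supports_if_bary_nonneg:
  assumes "\<not> collinear {a, b, c}" "\<And>w. w \<in> S \<Longrightarrow> 0 \<le> bary a b c w"
  shows "line_supports a b S"
  unfolding line_supports_def
proof (intro exI conjI ballI)
  let ?n = "- (rot90 (b - a) /\<^sub>R orient a b c)"
  have "a \<noteq> b" using assms(1) by auto
  then show "?n \<noteq> 0"
    using orient_nonzero_if_not_collinear[OF assms(1)] by simp
  show "?n \<bullet> b = ?n \<bullet> a"
    using bary_eq_inner[of a b c b] by (simp add: bary_def)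
  show "?n \<bullet> x \<le> ?n \<bullet> a" if "x \<in> S" for x
    using assms(2)[OF that] by (simp add: bary_eq_inner)
qed simp

lemma line_supports_two_vertices:
  assumes "compact S" "convex S" "a \<noteq> b" "a \<in> S" "b \<in> S" "line_supports a b S"
  obtains p q where "p \<noteq> q" "p \<in> vertices S" "q \<in> vertices S"
    "p \<in> affine hull {a, b}" "q \<in> affine hull {a, b}"
proof -
  obtain n d where n: "n \<noteq> 0" "n \<bullet> a = d" "n \<bullet> b = d" "\<And>x. x \<in> S \<Longrightarrow> n \<bullet> x \<le> d"
    using assms(6) by (auto simp: line_supports_def)
  let ?F = "S \<inter> {x. n \<bullet> x = d}"
  have "?F face_of S"
    using assms(2) n(4) by (rule face_of_Int_supporting_hyperplane_le)
  moreover have "a \<in> ?F" "b \<in> ?F"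
    using assms(4,5) n(2,3) by simp_all
  ultimately obtain p q where "p \<noteq> q" "p extreme_point_of S" "q extreme_point_of S" "p \<in> ?F" "q \<in> ?F"
    using assms(3) by (rule two_extreme_points_of_face[OF assms(1,2)])
  moreover have "?F \<subseteq> affine hull {a, b}"
    using hyperplane_eq_affine_hull_2[OF n(1) assms(3) n(2,3)] by blast
  ultimately show ?thesis
    by (intro that[of p q]) (auto simp: vertices_def)
qed

lemma line_supports_if_frontier_in_open_segment:
  assumes "convex S" "closed S" "a \<in> S" "b \<in> S" "m \<in> open_segment a b" "m \<in> frontier S"
  shows "line_supports a b S"
proof -
  obtain n where n: "n \<noteq> 0" "\<And>x. x \<in> S \<Longrightarrow> n \<bullet> x \<le> n \<bullet> m"
    using supporting_hyperplane_frontier[OF assms(1,2,6)] by blast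
  obtain u where u: "0 < u" "u < 1" "m = (1 - u) *\<^sub>R a + u *\<^sub>R b"
    using assms(5) by (auto simp: in_segment)
  have "(1 - u) * (n \<bullet> m - n \<bullet> a) + u * (n \<bullet> m - n \<bullet> b) = 0"
    unfolding u(3) by (simp add: inner_add_right algebra_simps)
  moreover have "0 \<le> (1 - u) * (n \<bullet> m - n \<bullet> a)" "0 \<le> u * (n \<bullet> m - n \<bullet> b)"
    using n(2) assms(3,4) u(1,2) by simp_all
  ultimately have "n \<bullet> a = n \<bullet> m" "n \<bullet> b = n \<bullet> m"
    using u(1,2) by (simp_all add: add_nonneg_eq_0_iff)
  then show ?thesis
    unfolding line_supports_def using n by blast
qed

lemma general_positionD:
  assumes "general_position V" "a \<in> V" "b \<in> V" "c \<in> V" "a \<noteq> b" "a \<noteq> c" "b \<noteq> c"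
  shows "\<not> collinear {a, b, c}"
  using assms unfolding general_position_def by blast

lemma no_common_supporting_line:
  assumes "compact P" "convex P" "compact Q" "convex Q"
    and "a \<noteq> b" "a \<in> P" "b \<in> P" "a \<in> Q" "b \<in> Q"
    and "line_supports a b P" "line_supports a b Q"
    and "vertices P \<inter> vertices Q = {}" "general_position (vertices P \<union> vertices Q)"
  shows False
proof -
  obtain p p' where p: "p \<noteq> p'" "p \<in> vertices P" "p' \<in> vertices P"
    "p \<in> affine hull {a, b}" "p' \<in> affine hull {a, b}"
    using line_supports_two_vertices[OF assms(1,2,5,6,7,10)] .
  obtain q where q: "q \<in> vertices Q" "q \<in> affine hull {a, b}"
    using line_supports_two_vertices[OF assms(3,4,5,8,9,11)] by metis
  have "collinear (affine hull {a, b})"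
    by (simp add: collinear_affine_hull_collinear collinear_2)
  moreover have "{p, p', q} \<subseteq> affine hull {a, b}"
    using p(4,5) q(2) by auto
  ultimately have "collinear {p, p', q}"
    by (rule collinear_subset)
  moreover have "p \<noteq> q" "p' \<noteq> q"
    using p(2,3) q(1) assms(12) by auto
  ultimately show False
    using general_positionD[OF assms(13), of p p' q] p(1-3) q(1) by blast
qed

lemma no_common_frontier_point_between:
  assumes "compact P" "convex P" "compact Q" "convex Q"
    and "a \<in> P" "b \<in> P" "a \<in> Q" "b \<in> Q"
    and "m \<in> open_segment a b" "m \<in> frontier P" "m \<in> frontier Q"
    and "vertices P \<inter> vertices Q = {}" "general_position (vertices P \<union> vertices Q)"
  shows False
proof -
  have "a \<noteq> b" using assms(9) by auto
  moreover have "line_supports a b P"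
    using compact_imp_closed[OF assms(1)]
    by (rule line_supports_if_frontier_in_open_segment[OF assms(2) _ assms(5,6,9,10)])
  moreover have "line_supports a b Q"
    using compact_imp_closed[OF assms(3)]
    by (rule line_supports_if_frontier_in_open_segment[OF assms(4) _ assms(7,8,9,11)])
  ultimately show False
    by (rule no_common_supporting_line[OF assms(1-4) _ assms(5-8) _ _ assms(12,13)])
qed

lemma not_beyond_two_edges_at_frontier:
  assumes "convex S" "closed S" "a \<in> S" "c \<in> S" "b \<in> frontier S" "\<not> collinear {a, b, c}"
  shows "beyond_edge a b c \<inter> beyond_edge b c a \<inter> S = {}"
proof (rule ccontr)
  assume "beyond_edge a b c \<inter> beyond_edge b c a \<inter> S \<noteq> {}"
  then obtain w where w: "w \<in> S" "bary b c a w < 0" "bary a b c w < 0"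
    by (auto simp: beyond_edge_def)
  obtain n where n: "n \<noteq> 0" "\<And>x. x \<in> S \<Longrightarrow> n \<bullet> x \<le> n \<bullet> b"
    using supporting_hyperplane_frontier[OF assms(1,2,5)] by blast
  have "n \<bullet> w = n \<bullet> (bary b c a w *\<^sub>R a + bary c a b w *\<^sub>R b + bary a b c w *\<^sub>R c)"
    by (simp only: bary_combination[OF assms(6)])
  then have "n \<bullet> w = bary b c a w * (n \<bullet> a) + bary c a b w * (n \<bullet> b) + bary a b c w * (n \<bullet> c)"
    by (simp add: inner_add_right)
  moreover have "n \<bullet> b = (bary b c a w + bary c a b w + bary a b c w) * (n \<bullet> b)"
    using bary_sum[OF assms(6), of w] by simp
  ultimately have "n \<bullet> w - n \<bullet> b = bary b c a w * (n \<bullet> a - n \<bullet> b) + bary a b c w * (n \<bullet> c - n \<bullet> b)"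
    by (simp add: algebra_simps)
  moreover have "0 \<le> bary b c a w * (n \<bullet> a - n \<bullet> b)" "0 \<le> bary a b c w * (n \<bullet> c - n \<bullet> b)"
    using w n(2) assms(3,4) by (simp_all add: mult_nonpos_nonpos)
  moreover have "n \<bullet> w - n \<bullet> b \<le> 0"
    using n(2) w(1) by simp
  ultimately have "bary b c a w * (n \<bullet> a - n \<bullet> b) = 0" "bary a b c w * (n \<bullet> c - n \<bullet> b) = 0"
    by linarith+
  then have "n \<bullet> a = n \<bullet> b" "n \<bullet> c = n \<bullet> b"
    using w(2,3) by simp_all
  moreover have "a \<noteq> b" using assms(6) by auto
  ultimately have "c \<in> affine hull {a, b}"
    using hyperplane_eq_affine_hull_2[OF n(1), of a b "n \<bullet> b"] by auto
  then show False
    using assms(6) affine_hull_3_imp_collinear by blast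
qed

lemma diff_avoids_two_beyond_edges:
  assumes "convex P" "closed P" "convex Q"
    and "x \<in> frontier P" "y \<in> frontier P" "z \<in> frontier P" "x \<in> Q" "y \<in> Q" "z \<in> Q"
    and "\<not> collinear {x, y, z}" "connected (P - Q)"
  shows "(beyond_edge x y z \<inter> (P - Q) = {} \<and> beyond_edge y z x \<inter> (P - Q) = {})
    \<or> (beyond_edge y z x \<inter> (P - Q) = {} \<and> beyond_edge z x y \<inter> (P - Q) = {})
    \<or> (beyond_edge z x y \<inter> (P - Q) = {} \<and> beyond_edge x y z \<inter> (P - Q) = {})"
proof (rule connected_avoids_two_of_three_open[OF assms(11) open_beyond_edge open_beyond_edge open_beyond_edge])
  have xyz: "x \<in> P" "y \<in> P" "z \<in> P"
    using assms(2,4-6) frontier_subset_closed by blast+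
  have "\<not> collinear {y, z, x}" "\<not> collinear {z, x, y}"
    using assms(10) by (simp_all add: insert_commute)
  then have "beyond_edge x y z \<inter> beyond_edge y z x \<inter> P = {}"
    "beyond_edge y z x \<inter> beyond_edge z x y \<inter> P = {}"
    "beyond_edge z x y \<inter> beyond_edge x y z \<inter> P = {}"
    using not_beyond_two_edges_at_frontier[OF assms(1,2)] xyz assms(4-6,10) by simp_all
  then show "beyond_edge x y z \<inter> beyond_edge y z x \<inter> (P - Q) = {}"
    "beyond_edge y z x \<inter> beyond_edge z x y \<inter> (P - Q) = {}"
    "beyond_edge z x y \<inter> beyond_edge x y z \<inter> (P - Q) = {}"
    by auto
  have "convex hull {x, y, z} \<subseteq> Q"
    using assms(3,7-9) by (simp add: hull_minimal)
  then have "\<not> (0 \<le> bary y z x w \<and> 0 \<le> bary z x y w \<and> 0 \<le> bary x y z w)" if "w \<notin> Q" for w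
    using in_convex_hull_3_if_bary_nonneg[OF assms(10), of w] that by blast
  then show "P - Q \<subseteq> beyond_edge x y z \<union> beyond_edge y z x \<union> beyond_edge z x y"
    by (auto simp: beyond_edge_def not_le)
qed

lemma line_supports_if_eq_beyond_edge:
  assumes "compact P" "convex P" "convex Q" "\<not> collinear {a, b, c}"
    and "P \<inter> beyond_edge a b c = Q \<inter> beyond_edge a b c" "vertices P \<inter> vertices Q = {}"
  shows "line_supports a b P"
proof (rule line_supports_if_bary_nonneg[OF assms(4)])
  let ?H = "{w. 0 \<le> bary a b c w}"
  have "v \<notin> beyond_edge a b c" if "v extreme_point_of P" for v
    using extreme_point_of_locally_eq[OF open_beyond_edge assms(5,3) _ that] that assms(6)
    by (auto simp: vertices_def)
  then have "{v. v extreme_point_of P} \<subseteq> ?H"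
    by (auto simp: beyond_edge_def not_less)
  moreover have "convex ?H"
    using convex_halfspace_ge[of "(rot90 (b - a) /\<^sub>R orient a b c) \<bullet> a" "rot90 (b - a) /\<^sub>R orient a b c"]
    by (simp only: bary_eq_inner diff_ge_0_iff_ge)
  ultimately have "P \<subseteq> ?H"
    using Krein_Milman_Minkowski[OF assms(1,2)] hull_minimal by metis
  then show "0 \<le> bary a b c w" if "w \<in> P" for w
    using that by blast
qed

lemma no_common_frontier_triangle:
  assumes "compact P" "convex P" "compact Q" "convex Q"
    and "connected (P - Q)" "connected (Q - P)"
    and "vertices P \<inter> vertices Q = {}" "general_position (vertices P \<union> vertices Q)"
    and "x \<in> frontier P \<inter> frontier Q" "y \<in> frontier P \<inter> frontier Q" "z \<in> frontier P \<inter> frontier Q"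
    and "\<not> collinear {x, y, z}"
  shows False
proof -
  have closed: "closed P" "closed Q"
    using assms(1,3) compact_imp_closed by blast+
  have in_PQ: "x \<in> P \<inter> Q" "y \<in> P \<inter> Q" "z \<in> P \<inter> Q"
    using assms(9-11) closed frontier_subset_closed by blast+
  have no_agreement: False
    if "\<not> collinear {a, b, c}" "a \<in> P \<inter> Q" "b \<in> P \<inter> Q"
      and "P \<inter> beyond_edge a b c = Q \<inter> beyond_edge a b c" for a b c
  proof -
    have "a \<noteq> b" using that(1) by auto
    moreover have "line_supports a b P" "line_supports a b Q"
      using line_supports_if_eq_beyond_edge[OF assms(1,2,4) that(1,4) assms(7)]
        line_supports_if_eq_beyond_edge[OF assms(3,4,2) that(1) that(4)[symmetric]] assms(7)
      by (auto simp: Int_commute)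
    ultimately show False
      using no_common_supporting_line[OF assms(1-4)] that(2,3) assms(7,8) by blast
  qed
  have "P \<inter> beyond_edge x y z = Q \<inter> beyond_edge x y z
      \<or> P \<inter> beyond_edge y z x = Q \<inter> beyond_edge y z x
      \<or> P \<inter> beyond_edge z x y = Q \<inter> beyond_edge z x y"
    using diff_avoids_two_beyond_edges[OF assms(2) closed(1) assms(4) _ _ _ _ _ _ assms(12,5)]
      diff_avoids_two_beyond_edges[OF assms(4) closed(2) assms(2) _ _ _ _ _ _ assms(12,6)]
      assms(9-11) in_PQ
    by blast
  moreover have "\<not> collinear {y, z, x}" "\<not> collinear {z, x, y}"
    using assms(12) by (simp_all add: insert_commute)
  ultimately show False
    using no_agreement assms(12) in_PQ by blast
qed

lemma no_three_common_frontier_points: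
  assumes "compact P" "convex P" "compact Q" "convex Q"
    and "connected (P - Q)" "connected (Q - P)"
    and "vertices P \<inter> vertices Q = {}" "general_position (vertices P \<union> vertices Q)"
    and "x \<in> frontier P \<inter> frontier Q" "y \<in> frontier P \<inter> frontier Q" "z \<in> frontier P \<inter> frontier Q"
    and "x \<noteq> y" "x \<noteq> z" "y \<noteq> z"
  shows False
proof (cases "collinear {x, y, z}")
  case True
  have "x \<in> P \<inter> Q" "y \<in> P \<inter> Q" "z \<in> P \<inter> Q"
    using assms(1,3,9-11) compact_imp_closed frontier_subset_closed by blast+
  moreover have "x \<in> open_segment y z \<or> y \<in> open_segment z x \<or> z \<in> open_segment x y"
    using True assms(12-14) by (auto simp: collinear_between_cases between_mem_segment open_segment_def)
  ultimately show False
    using no_common_frontier_point_between[OF assms(1-4) _ _ _ _ _ _ _ assms(7,8)] assms(9-11)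
    by (elim disjE) auto
next
  case False
  then show False
    using no_common_frontier_triangle[OF assms(1-11)] by blast
qed

theorem lemma2:
  fixes P Q :: "point set"
  assumes "convex_polygon P" and "convex_polygon Q"
    and "general_position (vertices P \<union> vertices Q)"
    and "weakly_disjoint P Q"
  shows "finite (frontier P \<inter> frontier Q) \<and> card (frontier P \<inter> frontier Q) \<le> 2"
proof -
  have "compact P" "convex P" "compact Q" "convex Q"
    using assms(1,2) unfolding convex_polygon_def
    by (auto simp: compact_convex_hull finite_imp_compact)
  moreover have "connected (P - Q)" "connected (Q - P)" "vertices P \<inter> vertices Q = {}"
    using assms(4) unfolding weakly_disjoint_def by auto
  ultimately show ?thesis
    using no_three_common_frontier_points[OF _ _ _ _ _ _ _ assms(3)]
    by (intro finite_card_le_2_if_no_three_distinct) blast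
qed

end
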